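(* Let $P\subseteq\{3,4,5,\ldots,\infty\}$. For all $A,B\in\mathcal{F}_P$ (when $\infty\in P$), respectively all $A,B\in\mathcal{G}_P$ (when $\infty\notin P$), there exists $C$ in the same family together with epimorphisms $f_1\colon C\to A$ and $f_2\colon C\to B$ belonging to that family.
   Context: Graphs are finite with reflexive symmetric edge relations. An epimorphism $f\colon B\to A$ is a surjection such that $\langle a_1,a_2\rangle$ is an edge of $A$ iff there are $b_i\in f^{-1}(a_i)$ forming an edge of $B$. It is monotone if every fibre $f^{-1}(a)$ induces a connected subgraph. A finite tree is a finite connected graph without cycles of nontrivial edges; $\mathrm{ord}(a)$ is the number of neighbours of $a$ other than $a$, equivalently the number of components of $A\setminus\{a\}$. For a monotone epimorphism $f\colon B\to A$ of finite trees and $a\in A$ with $\mathrm{ord}(a)=n\ge 3$, with $A_0,\dots,A_{n-1}$ the components of $A\setminus\{a\}$: $a$ is a point of weak coherence of $f$ (witnessed by $b$) if there is $b\in f^{-1}(a)$ with $m=\mathrm{ord}(b)\ge n$ and an injection $p\colon n\to m$ such that $f^{-1}(A_i)\subseteq B_{p(i)}$ for all $i$, where $B_0,\dots,B_{m-1}$ are the components of $B\setminus\{b\}$; it is a point of coherence if moreover $m=n$ and $p$ is a bijection. $f$ is coherent if every $a$ with $\mathrm{ord}(a)\ge3$ is a point of coherence. If $\infty\in P$, $\mathcal{F}_P$ consists of the finite trees with no vertex of order $2$, with epimorphisms $f\colon B\to A$ that are monotone, coherent at each $a$ with $\mathrm{ord}(a)\in P$, and, at each $a$ with $\mathrm{ord}(a)\ge3$,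 $\mathrm{ord}(a)\notin P$, weakly coherent with a witness $b$ satisfying $\mathrm{ord}(b)\notin P$. If $\infty\notin P$, $\mathcal{G}_P$ consists of the finite trees each of whose vertices is an endpoint (order at most $1$) or has order in $P$, with the monotone coherent epimorphisms. *)

theory Defs
  imports Main "HOL-Library.Extended_Nat"
begin

type_synonym 'a graph = "'a set \<times> ('a \<times> 'a) set"

definition verts :: "'a graph \<Rightarrow> 'a set" where "verts G = fst G"
definition edges :: "'a graph \<Rightarrow> ('a \<times> 'a) set" where "edges G = snd G"

definition is_graph :: "'a graph \<Rightarrow> bool" where
  "is_graph G \<longleftrightarrow> finite (verts G) \<and> edges G \<subseteq> verts G \<times> verts G
     \<and> (\<forall>x\<in>verts G. (x, x) \<in> edges G)
     \<and> (\<forall>x y. (x, y) \<in> edges G \<longrightarrow> (y, x) \<in> edges G)"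

definition induced_rel :: "'a graph \<Rightarrow> 'a set \<Rightarrow> ('a \<times> 'a) set" where
  "induced_rel G S = {(x, y). x \<in> S \<and> y \<in> S \<and> (x, y) \<in> edges G}"

definition connected_in :: "'a graph \<Rightarrow> 'a set \<Rightarrow> bool" where
  "connected_in G S \<longleftrightarrow> S \<subseteq> verts G \<and>
     (\<forall>x\<in>S. \<forall>y\<in>S. (x, y) \<in> (induced_rel G S)\<^sup>*)"

definition components :: "'a graph \<Rightarrow> 'a set \<Rightarrow> 'a set set" where
  "components G S = (\<lambda>x. {y. (x, y) \<in> (induced_rel G S)\<^sup>*}) ` S"

definition has_cycle :: "'a graph \<Rightarrow> bool" where
  "has_cycle G \<longleftrightarrow> (\<exists>vs. length vs \<ge> 3 \<and> distinct vs \<and> set vs \<subseteq> verts G \<and>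
     (\<forall>i < length vs. (vs ! i, vs ! ((i + 1) mod length vs)) \<in> edges G))"

definition is_tree :: "'a graph \<Rightarrow> bool" where
  "is_tree G \<longleftrightarrow> is_graph G \<and> verts G \<noteq> {} \<and> connected_in G (verts G) \<and> \<not> has_cycle G"

definition ord :: "'a graph \<Rightarrow> 'a \<Rightarrow> nat" where
  "ord G a = card {x \<in> verts G. (a, x) \<in> edges G \<and> x \<noteq> a}"

definition epimorphism :: "('b \<Rightarrow> 'a) \<Rightarrow> 'b graph \<Rightarrow> 'a graph \<Rightarrow> bool" where
  "epimorphism f B A \<longleftrightarrow> f ` verts B = verts A \<and>
     (\<forall>a1\<in>verts A. \<forall>a2\<in>verts A. (a1, a2) \<in> edges A \<longleftrightarrow>
        (\<exists>b1\<in>verts B. \<exists>b2\<in>verts B. f b1 = a1 \<and> f b2 = a2 \<and> (b1, b2) \<in> edges B))"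

definition fibre :: "('b \<Rightarrow> 'a) \<Rightarrow> 'b graph \<Rightarrow> 'a set \<Rightarrow> 'b set" where
  "fibre f B X = {b \<in> verts B. f b \<in> X}"

definition monotone_epi :: "('b \<Rightarrow> 'a) \<Rightarrow> 'b graph \<Rightarrow> 'a graph \<Rightarrow> bool" where
  "monotone_epi f B A \<longleftrightarrow> epimorphism f B A \<and>
     (\<forall>a\<in>verts A. connected_in B (fibre f B {a}))"

text \<open>b witnesses that a is a point of weak coherence of f (components indexed directly
  by the components themselves rather than by 0..n-1).\<close>
definition weak_coherence_witness :: "('b \<Rightarrow> 'a) \<Rightarrow> 'b graph \<Rightarrow> 'a graph \<Rightarrow> 'a \<Rightarrow> 'b \<Rightarrow> bool" where
  "weak_coherence_witness f B A a b \<longleftrightarrow> b \<in> verts B \<and> f b = a \<and> ord B b \<ge> ord A a \<and>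
     (\<exists>p. p ` components A (verts A - {a}) \<subseteq> components B (verts B - {b}) \<and>
          inj_on p (components A (verts A - {a})) \<and>
          (\<forall>K\<in>components A (verts A - {a}). fibre f B K \<subseteq> p K))"

definition coherence_witness :: "('b \<Rightarrow> 'a) \<Rightarrow> 'b graph \<Rightarrow> 'a graph \<Rightarrow> 'a \<Rightarrow> 'b \<Rightarrow> bool" where
  "coherence_witness f B A a b \<longleftrightarrow> b \<in> verts B \<and> f b = a \<and> ord B b = ord A a \<and>
     (\<exists>p. bij_betw p (components A (verts A - {a})) (components B (verts B - {b})) \<and>
          (\<forall>K\<in>components A (verts A - {a}). fibre f B K \<subseteq> p K))"

definition point_of_weak_coherence :: "('b \<Rightarrow> 'a) \<Rightarrow> 'b graph \<Rightarrow> 'a graph \<Rightarrow> 'a \<Rightarrow> bool" where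
  "point_of_weak_coherence f B A a \<longleftrightarrow> (\<exists>b. weak_coherence_witness f B A a b)"

definition point_of_coherence :: "('b \<Rightarrow> 'a) \<Rightarrow> 'b graph \<Rightarrow> 'a graph \<Rightarrow> 'a \<Rightarrow> bool" where
  "point_of_coherence f B A a \<longleftrightarrow> (\<exists>b. coherence_witness f B A a b)"

definition coherent :: "('b \<Rightarrow> 'a) \<Rightarrow> 'b graph \<Rightarrow> 'a graph \<Rightarrow> bool" where
  "coherent f B A \<longleftrightarrow> (\<forall>a\<in>verts A. ord A a \<ge> 3 \<longrightarrow> point_of_coherence f B A a)"

definition F_obj :: "enat set \<Rightarrow> 'a graph \<Rightarrow> bool" where
  "F_obj P A \<longleftrightarrow> is_tree A \<and> (\<forall>a\<in>verts A. ord A a \<noteq> 2)"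

definition F_mor :: "enat set \<Rightarrow> ('b \<Rightarrow> 'a) \<Rightarrow> 'b graph \<Rightarrow> 'a graph \<Rightarrow> bool" where
  "F_mor P f B A \<longleftrightarrow> monotone_epi f B A \<and>
     (\<forall>a\<in>verts A. ord A a \<ge> 3 \<longrightarrow>
        (enat (ord A a) \<in> P \<longrightarrow> point_of_coherence f B A a) \<and>
        (enat (ord A a) \<notin> P \<longrightarrow>
           (\<exists>b. weak_coherence_witness f B A a b \<and> enat (ord B b) \<notin> P)))"

definition G_obj :: "enat set \<Rightarrow> 'a graph \<Rightarrow> bool" where
  "G_obj P A \<longleftrightarrow> is_tree A \<and> (\<forall>a\<in>verts A. ord A a \<le> 1 \<or> enat (ord A a) \<in> P)"

definition G_mor :: "enat set \<Rightarrow> ('b \<Rightarrow> 'a) \<Rightarrow> 'b graph \<Rightarrow> 'a graph \<Rightarrow> bool" where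
  "G_mor P f B A \<longleftrightarrow> monotone_epi f B A \<and> coherent f B A"

end

theory Submission
  imports Defs "HOL-Library.Transitive_Closure_Table"
begin

(* Given trees A and B with at least two vertices, pick pendant vertices eA of A and eB of B
   with neighbours a1 and b1, delete eA and eB and join a1 to b1.  The result C is a tree in
   which every vertex keeps its order from A or from B, so C lies in every family containing A
   and B.  The map C \<rightarrow> A collapsing the B-side to eA is a monotone epimorphism whose fibres are
   singletons except over the leaf eA; at a singleton fibre, a map with unique edge lifts matches
   the components of the punctured trees bijectively, so the map is coherent at every vertex
   of order at least 3.  Symmetrically for B.  One-vertex trees are covered by constant maps. *)

lemma is_graph_edge_in_verts: "is_graph G \<Longrightarrow> (x, y) \<in> edges G \<Longrightarrow> x \<in> verts G \<and> y \<in> verts G"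
  unfolding is_graph_def by auto

lemma is_graph_edge_sym: "is_graph G \<Longrightarrow> (x, y) \<in> edges G \<Longrightarrow> (y, x) \<in> edges G"
  unfolding is_graph_def by blast

lemma is_graph_edge_refl: "is_graph G \<Longrightarrow> x \<in> verts G \<Longrightarrow> (x, x) \<in> edges G"
  unfolding is_graph_def by blast

lemma rtrancl_map:
  assumes "\<And>x y. (x, y) \<in> R \<Longrightarrow> (h x, h y) \<in> S" and "(x, y) \<in> R\<^sup>*"
  shows "(h x, h y) \<in> S\<^sup>*"
  using assms(2) by induction (auto intro: rtrancl_into_rtrancl assms(1))

lemma connected_inD: "connected_in G S \<Longrightarrow> x \<in> S \<Longrightarrow> y \<in> S \<Longrightarrow> (x, y) \<in> (induced_rel G S)\<^sup>*"
  unfolding connected_in_def by blast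

lemma induced_rel_rtrancl_in: "(x, y) \<in> (induced_rel G S)\<^sup>* \<Longrightarrow> x \<in> S \<Longrightarrow> y \<in> S"
  by (induction rule: rtrancl_induct) (auto simp: induced_rel_def)

lemma induced_rel_rtrancl_mono:
  "S \<subseteq> T \<Longrightarrow> (x, y) \<in> (induced_rel G S)\<^sup>* \<Longrightarrow> (x, y) \<in> (induced_rel G T)\<^sup>*"
  using rtrancl_mono[of "induced_rel G S" "induced_rel G T"] unfolding induced_rel_def by blast

lemma induced_rel_sym: "is_graph G \<Longrightarrow> sym (induced_rel G S)"
  unfolding induced_rel_def sym_def is_graph_def by blast

lemma components_subset: "K \<in> components G S \<Longrightarrow> K \<subseteq> S"
  unfolding components_def using induced_rel_rtrancl_in by fast

definition is_path :: "'a graph \<Rightarrow> 'a list \<Rightarrow> bool" where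
  "is_path G vs \<longleftrightarrow> distinct vs \<and> set vs \<subseteq> verts G \<and>
     (\<forall>i. Suc i < length vs \<longrightarrow> (vs ! i, vs ! Suc i) \<in> edges G)"

lemma is_path_Cons:
  assumes "is_path G vs" "vs \<noteq> []" "x \<in> verts G" "x \<notin> set vs" "(x, hd vs) \<in> edges G"
  shows "is_path G (x # vs)"
  using assms unfolding is_path_def by (auto simp: nth_Cons hd_conv_nth split: nat.split)

lemma is_path_take: "is_path G vs \<Longrightarrow> is_path G (take n vs)"
  unfolding is_path_def by (auto dest: in_set_takeD)

lemma rtrancl_path_nth:
  "rtrancl_path r x xs y \<Longrightarrow> i < length xs \<Longrightarrow> r ((x # xs) ! i) (xs ! i)"
proof (induction arbitrary: i rule: rtrancl_path.induct)
  case (step x y ys z)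
  then show ?case by (cases i) auto
qed simp

lemma rtrancl_path_last: "rtrancl_path r x xs y \<Longrightarrow> last (x # xs) = y"
  by (induction rule: rtrancl_path.induct) auto

lemma rtrancl_simple_path:
  assumes G: "is_graph G" and R: "R \<subseteq> edges G" and xy: "(x, y) \<in> R\<^sup>*" and x: "x \<in> verts G"
  obtains xs where "is_path G (x # xs)" "last (x # xs) = y"
    and "\<And>i. i < length xs \<Longrightarrow> ((x # xs) ! i, xs ! i) \<in> R"
proof -
  let ?r = "\<lambda>p q. (p, q) \<in> R"
  have "?r\<^sup>*\<^sup>* x y" using xy by (simp add: rtranclp_rtrancl_eq)
  then obtain xs0 where "rtrancl_path ?r x xs0 y" by (auto simp: rtranclp_eq_rtrancl_path)
  then obtain xs where p: "rtrancl_path ?r x xs y" and d: "distinct (x # xs)"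
    by (rule rtrancl_path_distinct)
  have step: "((x # xs) ! i, xs ! i) \<in> R" if "i < length xs" for i
    using rtrancl_path_nth[OF p that] .
  have "xs ! i \<in> verts G" if "i < length xs" for i
    using is_graph_edge_in_verts[OF G] step[OF that] R by blast
  then have "set (x # xs) \<subseteq> verts G" using x by (auto simp: in_set_conv_nth)
  with d step R have "is_path G (x # xs)" unfolding is_path_def by auto
  then show thesis using that rtrancl_path_last[OF p] step by blast
qed

lemma has_cycleI:
  assumes p: "is_path G vs" and len: "length vs \<ge> 3" and e: "(last vs, hd vs) \<in> edges G"
  shows "has_cycle G"
  unfolding has_cycle_def
proof (intro exI[of _ vs] conjI allI impI)
  show "distinct vs" "set vs \<subseteq> verts G" using p unfolding is_path_def by auto
  fix i assume i: "i < length vs"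
  show "(vs ! i, vs ! ((i + 1) mod length vs)) \<in> edges G"
  proof (cases "Suc i < length vs")
    case True
    then show ?thesis using p unfolding is_path_def by simp
  next
    case False
    with i have "Suc i = length vs" by simp
    then have "i = length vs - 1" "(i + 1) mod length vs = 0" by simp_all
    moreover have "vs \<noteq> []" using len by auto
    ultimately show ?thesis using e by (simp add: last_conv_nth hd_conv_nth)
  qed
qed (use len in simp)

definition edges_except :: "'a graph \<Rightarrow> 'a \<Rightarrow> 'a \<Rightarrow> ('a \<times> 'a) set" where
  "edges_except G u v = {(p, q). (p, q) \<in> edges G \<and> {p, q} \<noteq> {u, v}}"

(* Acyclicity in this form, unlike the existence of a cycle, can be pulled back along maps with
   unique edge lifts (bridge_lift). *)
definition every_edge_bridge :: "'a graph \<Rightarrow> bool" where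
  "every_edge_bridge G \<longleftrightarrow>
     (\<forall>u v. (u, v) \<in> edges G \<longrightarrow> u \<noteq> v \<longrightarrow> (v, u) \<notin> (edges_except G u v)\<^sup>*)"

lemma every_edge_bridge_if_acyclic:
  assumes G: "is_graph G" and acyclic: "\<not> has_cycle G"
  shows "every_edge_bridge G"
  unfolding every_edge_bridge_def
proof (intro allI impI notI)
  fix u v
  assume e: "(u, v) \<in> edges G" and uv: "u \<noteq> v" and vu_path: "(v, u) \<in> (edges_except G u v)\<^sup>*"
  have "v \<in> verts G" using is_graph_edge_in_verts[OF G e] by blast
  moreover have "edges_except G u v \<subseteq> edges G" unfolding edges_except_def by auto
  ultimately obtain xs where p: "is_path G (v # xs)" and l: "last (v # xs) = u"
    and st: "\<And>i. i < length xs \<Longrightarrow> ((v # xs) ! i, xs ! i) \<in> edges_except G u v"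
    using rtrancl_simple_path[OF G _ vu_path] by blast
  have "length xs \<noteq> 1"
  proof
    assume "length xs = 1"
    then have "(v, u) \<in> edges_except G u v" using st[of 0] l by (cases xs) auto
    then show False unfolding edges_except_def by (auto simp: insert_commute)
  qed
  moreover have "length xs \<noteq> 0" using l uv by auto
  ultimately have "length (v # xs) \<ge> 3" by (simp only: length_Cons)
  moreover have "(last (v # xs), hd (v # xs)) \<in> edges G" unfolding l using e by simp
  ultimately have "has_cycle G" using has_cycleI[OF p] by simp
  with acyclic show False ..
qed

lemma cycle_edge_not_first:
  assumes d: "distinct vs" and len: "length vs \<ge> 3" and i: "0 < i" "i < length vs"
  shows "{vs ! i, vs ! ((i + 1) mod length vs)} \<noteq> {vs ! 0, vs ! 1}"
proof -
  have idx: "vs ! k = vs ! l \<longleftrightarrow> k = l" if "k < length vs" "l < length vs" for k l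
    using d that by (simp add: nth_eq_iff_index_eq)
  have ne: "vs \<noteq> []" using len by (cases vs) auto
  have "vs ! i \<notin> {vs ! 0, vs ! 1} \<or> vs ! ((i + 1) mod length vs) \<notin> {vs ! 0, vs ! 1}"
  proof (cases "i = 1")
    case True
    then show ?thesis using idx[of "Suc (Suc 0)" 0] idx[of "Suc (Suc 0)" "Suc 0"] len ne by auto
  next
    case False
    then show ?thesis using idx[of i 0] idx[of i 1] i ne by auto
  qed
  then show ?thesis by auto
qed

lemma not_every_edge_bridge_if_cycle:
  assumes "has_cycle G"
  shows "\<not> every_edge_bridge G"
proof -
  from assms obtain vs where len: "length vs \<ge> 3" and d: "distinct vs"
    and e: "\<And>i. i < length vs \<Longrightarrow> (vs ! i, vs ! ((i + 1) mod length vs)) \<in> edges G"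
    unfolding has_cycle_def by blast
  have ne: "vs \<noteq> []" using len by (cases vs) auto
  define n where "n = length vs"
  let ?u = "vs ! 0" and ?v = "vs ! 1"
  let ?R = "edges_except G ?u ?v"
  have idx: "vs ! i = vs ! j \<longleftrightarrow> i = j" if "i < n" "j < n" for i j
    using d that n_def by (simp add: nth_eq_iff_index_eq)
  have uv: "?u \<noteq> ?v" using idx[of 0 1] len n_def by (simp only:)
  have cycle_edge: "(vs ! i, vs ! ((i + 1) mod n)) \<in> ?R" if "0 < i" "i < n" for i
    using e[of i] cycle_edge_not_first[OF d len that[unfolded n_def]] that n_def
    unfolding edges_except_def by auto
  have path: "(?v, vs ! k) \<in> ?R\<^sup>*" if "1 \<le> k" "k < n" for k
    using that
  proof (induction k rule: dec_induct)
    case (step k)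
    then have "(vs ! k, vs ! Suc k) \<in> ?R" using cycle_edge[of k] by simp
    with step show ?case by (simp add: rtrancl_into_rtrancl)
  qed simp
  have "(vs ! (n - 1), ?u) \<in> ?R"
  proof -
    have "n - 1 + 1 = n" using len n_def by simp
    then have "(n - 1 + 1) mod n = 0" by simp
    then show ?thesis using cycle_edge[of "n - 1"] len n_def by simp
  qed
  moreover have "(?v, vs ! (n - 1)) \<in> ?R\<^sup>*" using path[of "n - 1"] len n_def by simp
  ultimately have "(?v, ?u) \<in> ?R\<^sup>*" by (simp add: rtrancl_into_rtrancl)
  moreover have "(?u, ?v) \<in> edges G" using e[of 0] len ne by simp
  ultimately show ?thesis using uv unfolding every_edge_bridge_def by blast
qed

definition pendant :: "'a graph \<Rightarrow> 'a \<Rightarrow> 'a \<Rightarrow> bool" where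
  "pendant G e w \<longleftrightarrow> e \<noteq> w \<and> (e, w) \<in> edges G \<and> (\<forall>x. (e, x) \<in> edges G \<longrightarrow> x = e \<or> x = w)"

lemma ord_pendant: "is_graph G \<Longrightarrow> pendant G e w \<Longrightarrow> ord G e = 1"
proof -
  assume G: "is_graph G" and "pendant G e w"
  then have "{x \<in> verts G. (e, x) \<in> edges G \<and> x \<noteq> e} = {w}"
    using is_graph_edge_in_verts[OF G] unfolding pendant_def by auto
  then show ?thesis unfolding ord_def by simp
qed

lemma longest_path_exists:
  assumes fin: "finite (verts G)" and p0: "is_path G vs0"
  obtains vs where "is_path G vs" "length vs0 \<le> length vs"
    "\<And>ws. is_path G ws \<Longrightarrow> length ws \<le> length vs"
proof -
  let ?P = "\<lambda>k. \<exists>vs. is_path G vs \<and> length vs = k"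
  have "k \<le> card (verts G)" if "?P k" for k
  proof -
    from that obtain vs where "distinct vs" "set vs \<subseteq> verts G" "length vs = k"
      unfolding is_path_def by blast
    then show ?thesis using card_mono[OF fin] by (metis distinct_card)
  qed
  moreover have "?P (length vs0)" using p0 by blast
  ultimately obtain k where "?P k" "\<forall>k'. ?P k' \<longrightarrow> k' \<le> k"
    using Nat.ex_has_greatest_nat[of ?P "length vs0" "card (verts G)"] by blast
  then show thesis using that p0 by blast
qed

lemma pendant_longest_path_start:
  assumes G: "is_graph G" and acyclic: "\<not> has_cycle G"
    and p: "is_path G vs" and len: "length vs \<ge> 2"
    and longest: "\<And>ws. is_path G ws \<Longrightarrow> length ws \<le> length vs"
  shows "pendant G (vs ! 0) (vs ! 1)"
  unfolding pendant_def
proof (intro conjI allI impI)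
  have "distinct vs" using p unfolding is_path_def by simp
  moreover have "0 < length vs" "1 < length vs" using len by linarith+
  ultimately show "vs ! 0 \<noteq> vs ! 1" by (metis nth_eq_iff_index_eq zero_neq_one)
  show "(vs ! 0, vs ! 1) \<in> edges G" using p len unfolding is_path_def by simp
  fix x assume ex: "(vs ! 0, x) \<in> edges G"
  show "x = vs ! 0 \<or> x = vs ! 1"
  proof (rule ccontr)
    assume x: "\<not> (x = vs ! 0 \<or> x = vs ! 1)"
    show False
    proof (cases "x \<in> set vs")
      case False
      have "vs \<noteq> []" using len by (cases vs) auto
      then have "(x, hd vs) \<in> edges G" using is_graph_edge_sym[OF G ex] by (simp add: hd_conv_nth)
      moreover have "x \<in> verts G" using is_graph_edge_in_verts[OF G ex] by blast
      ultimately show False using longest[OF is_path_Cons[OF p \<open>vs \<noteq> []\<close> _ False]] by simp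
    next
      case True
      then obtain j where j: "j < length vs" "x = vs ! j" by (metis in_set_conv_nth)
      with x have "j \<noteq> 0" "j \<noteq> 1" by metis+
      then have "j \<ge> 2" by arith
      have "is_path G (take (Suc j) vs)" using is_path_take[OF p] .
      moreover have "length (take (Suc j) vs) \<ge> 3" using j \<open>j \<ge> 2\<close> by simp
      moreover have "take (Suc j) vs \<noteq> []" "vs \<noteq> []" using j by auto
      then have "(last (take (Suc j) vs), hd (take (Suc j) vs)) \<in> edges G"
        using j is_graph_edge_sym[OF G ex] by (simp add: last_conv_nth hd_conv_nth)
      ultimately have "has_cycle G" by (rule has_cycleI)
      with acyclic show False ..
    qed
  qed
qed

lemma tree_has_pendant:
  assumes T: "is_tree G" and u: "u \<in> verts G" and v: "v \<in> verts G" and uv: "u \<noteq> v"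
  obtains e w where "pendant G e w"
proof -
  have G: "is_graph G" and acyclic: "\<not> has_cycle G" and fin: "finite (verts G)"
    and c: "connected_in G (verts G)"
    using T unfolding is_tree_def is_graph_def by auto
  have "(u, v) \<in> (induced_rel G (verts G))\<^sup>*" using connected_inD[OF c u v] .
  moreover have "induced_rel G (verts G) \<subseteq> edges G" unfolding induced_rel_def by auto
  ultimately obtain xs where p0: "is_path G (u # xs)" and "last (u # xs) = v"
    using rtrancl_simple_path[OF G _ _ u] by blast
  with uv have "length (u # xs) \<ge> 2" by (cases xs) auto
  obtain vs where "is_path G vs" "length (u # xs) \<le> length vs"
    "\<And>ws. is_path G ws \<Longrightarrow> length ws \<le> length vs"
    using longest_path_exists[OF fin p0] by blast
  with \<open>length (u # xs) \<ge> 2\<close> have "pendant G (vs ! 0) (vs ! 1)"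
    using pendant_longest_path_start[OF G acyclic] by simp
  then show thesis by (rule that)
qed

lemma connected_remove_pendant:
  assumes G: "is_graph G" and c: "connected_in G (verts G)" and e: "pendant G e w"
  shows "connected_in G (verts G - {e})"
  unfolding connected_in_def
proof (intro conjI ballI)
  fix x y assume x: "x \<in> verts G - {e}" and y: "y \<in> verts G - {e}"
  have w: "w \<in> verts G" "w \<noteq> e" using e is_graph_edge_in_verts[OF G] unfolding pendant_def by auto
  define r where "r z = (if z = e then w else z)" for z
  have r_step: "(r p, r q) \<in> induced_rel G (verts G - {e})" if "(p, q) \<in> induced_rel G (verts G)" for p q
  proof -
    have "p \<in> verts G" "q \<in> verts G" "(p, q) \<in> edges G" "(q, p) \<in> edges G"
      using that is_graph_edge_sym[OF G] unfolding induced_rel_def by auto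
    with e w show ?thesis
      using is_graph_edge_refl[OF G] unfolding r_def induced_rel_def pendant_def by auto
  qed
  have "(x, y) \<in> (induced_rel G (verts G))\<^sup>*" using connected_inD[OF c] x y by blast
  from rtrancl_map[of _ r, OF r_step this]
  show "(x, y) \<in> (induced_rel G (verts G - {e}))\<^sup>*" using x y unfolding r_def by simp
qed simp

definition unique_edge_lifts :: "('b \<Rightarrow> 'a) \<Rightarrow> 'b graph \<Rightarrow> bool" where
  "unique_edge_lifts f C \<longleftrightarrow> (\<forall>p q p' q'. (p, q) \<in> edges C \<longrightarrow> (p', q') \<in> edges C \<longrightarrow>
      f p = f p' \<longrightarrow> f q = f q' \<longrightarrow> f p \<noteq> f q \<longrightarrow> p = p' \<and> q = q')"

locale unique_lift_epi =
  fixes f :: "'b \<Rightarrow> 'a" and C :: "'b graph" and A :: "'a graph"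
  assumes graph_C: "is_graph C" and graph_A: "is_graph A"
    and monotone: "monotone_epi f C A" and unique_lifts: "unique_edge_lifts f C"
begin

lemma epi: "epimorphism f C A"
  using monotone unfolding monotone_epi_def by simp

lemma image_verts: "f ` verts C = verts A"
  using epi unfolding epimorphism_def by simp

lemma edge_iff:
  "a \<in> verts A \<Longrightarrow> a' \<in> verts A \<Longrightarrow>
    (a, a') \<in> edges A \<longleftrightarrow> (\<exists>b\<in>verts C. \<exists>b'\<in>verts C. f b = a \<and> f b' = a' \<and> (b, b') \<in> edges C)"
  using epi unfolding epimorphism_def by simp

lemma edge_image: "(p, q) \<in> edges C \<Longrightarrow> (f p, f q) \<in> edges A"
  using edge_iff[of "f p" "f q"] is_graph_edge_in_verts[OF graph_C, of p q] image_verts by blast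

lemma edge_lift:
  "(a, a') \<in> edges A \<Longrightarrow> \<exists>b\<in>verts C. \<exists>b'\<in>verts C. f b = a \<and> f b' = a' \<and> (b, b') \<in> edges C"
  using edge_iff is_graph_edge_in_verts[OF graph_A] by blast

lemma lift_unique:
  "(p, q) \<in> edges C \<Longrightarrow> (p', q') \<in> edges C \<Longrightarrow> f p = f p' \<Longrightarrow> f q = f q' \<Longrightarrow> f p \<noteq> f q
    \<Longrightarrow> p = p' \<and> q = q'"
  using unique_lifts unfolding unique_edge_lifts_def by simp

lemma fibre_connected: "a \<in> verts A \<Longrightarrow> connected_in C (fibre f C {a})"
  using monotone unfolding monotone_epi_def by simp

lemma edges_except_image:
  assumes uv: "(u, v) \<in> edges C" "f u \<noteq> f v" and pq: "(p, q) \<in> edges_except C u v"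
  shows "(f p, f q) \<in> edges_except A (f u) (f v)"
proof -
  have p_q: "(p, q) \<in> edges C" "{p, q} \<noteq> {u, v}" using pq unfolding edges_except_def by auto
  have "\<not> (f p = f u \<and> f q = f v)"
    using lift_unique[OF p_q(1) uv(1)] uv(2) p_q(2) by auto
  moreover have "\<not> (f p = f v \<and> f q = f u)"
    using lift_unique[OF is_graph_edge_sym[OF graph_C p_q(1)] uv(1)] uv(2) p_q(2)
    by (auto simp: insert_commute)
  ultimately have "{f p, f q} \<noteq> {f u, f v}" by (auto simp: doubleton_eq_iff)
  with edge_image[OF p_q(1)] show ?thesis unfolding edges_except_def by simp
qed

lemma bridge_lift:
  assumes "every_edge_bridge A" "(u, v) \<in> edges C" "f u \<noteq> f v"
  shows "(v, u) \<notin> (edges_except C u v)\<^sup>*"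
proof
  assume "(v, u) \<in> (edges_except C u v)\<^sup>*"
  then have "(f v, f u) \<in> (edges_except A (f u) (f v))\<^sup>*"
    by (rule rtrancl_map[rotated]) (rule edges_except_image[OF assms(2,3)])
  with assms edge_image show False unfolding every_edge_bridge_def by blast
qed

context
  fixes a c
  assumes a: "a \<in> verts A" and singleton: "fibre f C {a} = {c}"
begin

lemma singleton_fibre_point: "c \<in> verts C" "f c = a"
  using singleton unfolding fibre_def by blast+

lemma not_over_singleton:
  assumes "x \<in> verts C" "x \<noteq> c" shows "f x \<noteq> a"
proof
  assume "f x = a"
  with assms(1) have "x \<in> fibre f C {a}" unfolding fibre_def by simp
  with singleton assms(2) show False by simp
qed

lemma ord_singleton_fibre: "ord C c = ord A a"
proof -
  let ?NC = "{x \<in> verts C. (c, x) \<in> edges C \<and> x \<noteq> c}"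
  let ?NA = "{x \<in> verts A. (a, x) \<in> edges A \<and> x \<noteq> a}"
  have "inj_on f ?NC"
  proof (rule inj_onI)
    fix x y assume x: "x \<in> ?NC" and y: "y \<in> ?NC" and "f x = f y"
    moreover have "f c \<noteq> f x"
      using x not_over_singleton[of x] singleton_fibre_point by simp
    ultimately show "x = y" using lift_unique[of c x c y] x y by simp
  qed
  moreover have "f ` ?NC = ?NA"
  proof
    show "f ` ?NC \<subseteq> ?NA"
    proof
      fix y assume "y \<in> f ` ?NC"
      then obtain x where x: "x \<in> ?NC" "y = f x" by blast
      then have "(a, y) \<in> edges A" using edge_image singleton_fibre_point by blast
      moreover have "y \<noteq> a" using x not_over_singleton[of x] by simp
      moreover have "y \<in> verts A" using x image_verts by blast
      ultimately show "y \<in> ?NA" by simp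
    qed
    show "?NA \<subseteq> f ` ?NC"
    proof
      fix x assume x: "x \<in> ?NA"
      then obtain b b' where "b \<in> verts C" "b' \<in> verts C" "f b = a" "f b' = x" "(b, b') \<in> edges C"
        using edge_lift by blast
      moreover from this have "b = c" using not_over_singleton by blast
      ultimately have "b' \<in> ?NC" "x = f b'" using x by auto
      then show "x \<in> f ` ?NC" by blast
    qed
  qed
  ultimately have "bij_betw f ?NC ?NA" by (rule bij_betw_imageI)
  then show ?thesis unfolding ord_def by (rule bij_betw_same_card)
qed

lemma rtrancl_image_off_singleton:
  "(x, y) \<in> (induced_rel C (verts C - {c}))\<^sup>* \<Longrightarrow> (f x, f y) \<in> (induced_rel A (verts A - {a}))\<^sup>*"
proof (erule rtrancl_map[rotated])
  fix p q assume "(p, q) \<in> induced_rel C (verts C - {c})"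
  then have "p \<in> verts C - {c}" "q \<in> verts C - {c}" "(p, q) \<in> edges C"
    unfolding induced_rel_def by auto
  then show "(f p, f q) \<in> induced_rel A (verts A - {a})"
    using edge_image image_verts not_over_singleton unfolding induced_rel_def by auto
qed

lemma same_fibre_joined_off_singleton:
  assumes "p \<in> verts A - {a}" "x \<in> fibre f C {p}" "y \<in> fibre f C {p}"
  shows "(x, y) \<in> (induced_rel C (verts C - {c}))\<^sup>*"
proof -
  have "fibre f C {p} \<subseteq> verts C - {c}"
    using assms(1) singleton_fibre_point unfolding fibre_def by auto
  moreover have "(x, y) \<in> (induced_rel C (fibre f C {p}))\<^sup>*"
    using connected_inD[OF fibre_connected] assms by blast
  ultimately show ?thesis by (rule induced_rel_rtrancl_mono)
qed

lemma rtrancl_lift_off_singleton: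
  assumes "(p, q) \<in> (induced_rel A (verts A - {a}))\<^sup>*" "p \<in> verts A - {a}"
    and "x \<in> fibre f C {p}" "y \<in> fibre f C {q}"
  shows "(x, y) \<in> (induced_rel C (verts C - {c}))\<^sup>*"
  using assms(1,4)
proof (induction arbitrary: y rule: rtrancl_induct)
  case base
  then show ?case using same_fibre_joined_off_singleton assms(2,3) by blast
next
  case (step q r)
  then have qr: "q \<in> verts A - {a}" "r \<in> verts A - {a}" "(q, r) \<in> edges A"
    unfolding induced_rel_def by auto
  then obtain b b' where b: "b \<in> verts C" "b' \<in> verts C" "f b = q" "f b' = r" "(b, b') \<in> edges C"
    using edge_lift by blast
  then have "(x, b) \<in> (induced_rel C (verts C - {c}))\<^sup>*"
    using step.IH unfolding fibre_def by blast
  moreover have "(b, b') \<in> induced_rel C (verts C - {c})"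
    using b qr singleton_fibre_point unfolding induced_rel_def by auto
  moreover have "(b', y) \<in> (induced_rel C (verts C - {c}))\<^sup>*"
    using same_fibre_joined_off_singleton[OF qr(2)] b step.prems unfolding fibre_def by blast
  ultimately show ?case by (meson rtrancl_into_rtrancl rtrancl_trans)
qed

lemma image_off_singleton: "f ` (verts C - {c}) = verts A - {a}"
proof (intro equalityI subsetI)
  fix p assume "p \<in> f ` (verts C - {c})"
  then show "p \<in> verts A - {a}" using image_verts not_over_singleton by blast
next
  fix p assume p: "p \<in> verts A - {a}"
  then obtain x where "x \<in> verts C" "p = f x" using image_verts by (metis DiffD1 imageE)
  moreover have "x \<noteq> c" using p singleton_fibre_point calculation by blast
  ultimately show "p \<in> f ` (verts C - {c})" by blast
qed

lemma component_off_singleton: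
  assumes x: "x \<in> verts C - {c}"
  shows "{y. (x, y) \<in> (induced_rel C (verts C - {c}))\<^sup>*} =
    fibre f C {q. (f x, q) \<in> (induced_rel A (verts A - {a}))\<^sup>*}"
proof (intro equalityI subsetI)
  fix y assume "y \<in> {y. (x, y) \<in> (induced_rel C (verts C - {c}))\<^sup>*}"
  then have xy: "(x, y) \<in> (induced_rel C (verts C - {c}))\<^sup>*" by simp
  then have "y \<in> verts C" using induced_rel_rtrancl_in x by fast
  with rtrancl_image_off_singleton[OF xy]
  show "y \<in> fibre f C {q. (f x, q) \<in> (induced_rel A (verts A - {a}))\<^sup>*}"
    unfolding fibre_def by simp
next
  fix y assume "y \<in> fibre f C {q. (f x, q) \<in> (induced_rel A (verts A - {a}))\<^sup>*}"
  then have y: "y \<in> fibre f C {f y}" and "(f x, f y) \<in> (induced_rel A (verts A - {a}))\<^sup>*"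
    unfolding fibre_def by simp_all
  moreover have "f x \<in> verts A - {a}" using x image_off_singleton by blast
  moreover have "x \<in> fibre f C {f x}" using x unfolding fibre_def by simp
  ultimately have "(x, y) \<in> (induced_rel C (verts C - {c}))\<^sup>*"
    using rtrancl_lift_off_singleton by blast
  then show "y \<in> {y. (x, y) \<in> (induced_rel C (verts C - {c}))\<^sup>*}" by simp
qed

lemma components_off_singleton:
  "components C (verts C - {c}) = fibre f C ` components A (verts A - {a})"
proof -
  have "components C (verts C - {c}) =
      (\<lambda>x. fibre f C {q. (f x, q) \<in> (induced_rel A (verts A - {a}))\<^sup>*}) ` (verts C - {c})"
    unfolding components_def using component_off_singleton by (rule image_cong[OF refl])
  also have "\<dots> = fibre f C ` (\<lambda>p. {q. (p, q) \<in> (induced_rel A (verts A - {a}))\<^sup>*}) `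
      f ` (verts C - {c})"
    by (simp add: image_image)
  finally show ?thesis unfolding image_off_singleton components_def .
qed

lemma coherence_witness_singleton_fibre: "coherence_witness f C A a c"
proof -
  have "inj_on (fibre f C) (components A (verts A - {a}))"
  proof (rule inj_onI)
    fix K K' assume "K \<in> components A (verts A - {a})" "K' \<in> components A (verts A - {a})"
      and "fibre f C K = fibre f C K'"
    moreover have "f ` fibre f C L = L" if "L \<in> components A (verts A - {a})" for L
      using components_subset[OF that] image_verts unfolding fibre_def by fastforce
    ultimately show "K = K'" by metis
  qed
  then have "bij_betw (fibre f C) (components A (verts A - {a})) (components C (verts C - {c}))"
    unfolding bij_betw_def components_off_singleton by simp
  then show ?thesis
    unfolding coherence_witness_def using singleton_fibre_point ord_singleton_fibre by blast
qed

end

end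

definition glue_map :: "('a \<Rightarrow> nat) \<Rightarrow> 'a \<Rightarrow> nat \<Rightarrow> 'a \<Rightarrow> nat" where
  "glue_map i e t x = (if x = e then t else i x)"

(* Deleting the pendant vertices eA, eB and joining a1 to b1, realised on nat through the
   injections iA, iB: glue_map sends eA to iB b1 and eB to iA a1, so both pendant edges become
   the joining edge. *)
definition glue ::
    "'a graph \<Rightarrow> 'a \<Rightarrow> 'a \<Rightarrow> ('a \<Rightarrow> nat) \<Rightarrow> 'b graph \<Rightarrow> 'b \<Rightarrow> 'b \<Rightarrow> ('b \<Rightarrow> nat) \<Rightarrow> nat graph" where
  "glue A eA a1 iA B eB b1 iB =
     (iA ` (verts A - {eA}) \<union> iB ` (verts B - {eB}),
      map_prod (glue_map iA eA (iB b1)) (glue_map iA eA (iB b1)) ` edges A \<union>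
      map_prod (glue_map iB eB (iA a1)) (glue_map iB eB (iA a1)) ` edges B)"

definition glue_proj :: "'a graph \<Rightarrow> 'a \<Rightarrow> ('a \<Rightarrow> nat) \<Rightarrow> nat \<Rightarrow> 'a" where
  "glue_proj A eA iA n = (if n \<in> iA ` (verts A - {eA}) then inv_into (verts A - {eA}) iA n else eA)"

lemma glue_commute: "glue A eA a1 iA B eB b1 iB = glue B eB b1 iB A eA a1 iA"
  unfolding glue_def by (simp add: Un_commute)

locale glue_setup =
  fixes A :: "'a graph" and eA a1 :: 'a and iA :: "'a \<Rightarrow> nat"
    and B :: "'b graph" and eB b1 :: 'b and iB :: "'b \<Rightarrow> nat"
  assumes tree_A: "is_tree A" and pendant_A: "pendant A eA a1"
    and tree_B: "is_tree B" and pendant_B: "pendant B eB b1"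
    and inj_A: "inj_on iA (verts A)" and inj_B: "inj_on iB (verts B)"
    and disjoint: "iA ` verts A \<inter> iB ` verts B = {}"
begin

lemma swap: "glue_setup B eB b1 iB A eA a1 iA"
  using glue_setup_axioms unfolding glue_setup_def by (auto simp: Int_commute)

abbreviation "C \<equiv> glue A eA a1 iA B eB b1 iB"
abbreviation "\<pi> \<equiv> glue_proj A eA iA"
abbreviation "\<iota>A \<equiv> glue_map iA eA (iB b1)"
abbreviation "\<iota>B \<equiv> glue_map iB eB (iA a1)"

lemma graph_A: "is_graph A" and graph_B: "is_graph B"
  using tree_A tree_B unfolding is_tree_def by simp_all

lemma pendant_edge_A: "eA \<in> verts A" "a1 \<in> verts A" "eA \<noteq> a1" "(eA, a1) \<in> edges A"
  using pendant_A is_graph_edge_in_verts[OF graph_A] unfolding pendant_def by blast+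

lemma pendant_edge_B: "eB \<in> verts B" "b1 \<in> verts B" "eB \<noteq> b1" "(eB, b1) \<in> edges B"
  using pendant_B is_graph_edge_in_verts[OF graph_B] unfolding pendant_def by blast+

lemma verts_C: "verts C = iA ` (verts A - {eA}) \<union> iB ` (verts B - {eB})"
  unfolding glue_def verts_def by simp

lemma edges_C: "edges C = map_prod \<iota>A \<iota>A ` edges A \<union> map_prod \<iota>B \<iota>B ` edges B"
  unfolding glue_def edges_def by simp

lemma verts_C_cases:
  assumes "n \<in> verts C"
  obtains (A) x where "x \<in> verts A - {eA}" "n = iA x" | (B) y where "y \<in> verts B - {eB}" "n = iB y"
  using assms unfolding verts_C by blast

lemma \<pi>_iA: "x \<in> verts A - {eA} \<Longrightarrow> \<pi> (iA x) = x"
  unfolding glue_proj_def using inj_A by (simp add: inv_into_f_f inj_on_diff)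

lemma \<pi>_iB: "y \<in> verts B \<Longrightarrow> \<pi> (iB y) = eA"
  unfolding glue_proj_def using disjoint by auto

lemma \<iota>A_in_C: "x \<in> verts A \<Longrightarrow> \<iota>A x \<in> verts C"
  unfolding verts_C glue_map_def using pendant_edge_B by auto

lemma \<iota>B_in_C: "y \<in> verts B \<Longrightarrow> \<iota>B y \<in> verts C"
  unfolding verts_C glue_map_def using pendant_edge_A by auto

lemma \<pi>_\<iota>A: "x \<in> verts A \<Longrightarrow> \<pi> (\<iota>A x) = x"
  unfolding glue_map_def using \<pi>_iA \<pi>_iB pendant_edge_B by auto

lemma \<pi>_\<iota>B: "y \<in> verts B \<Longrightarrow> \<pi> (\<iota>B y) = (if y = eB then a1 else eA)"
  unfolding glue_map_def using \<pi>_iA \<pi>_iB pendant_edge_A by auto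

lemma \<pi>_in_A: "n \<in> verts C \<Longrightarrow> \<pi> n \<in> verts A"
  by (erule verts_C_cases) (auto simp: \<pi>_iA \<pi>_iB pendant_edge_A)

lemma edge_\<iota>A: "(x, y) \<in> edges A \<Longrightarrow> (\<iota>A x, \<iota>A y) \<in> edges C"
  unfolding edges_C by blast

lemma edge_\<iota>B: "(x, y) \<in> edges B \<Longrightarrow> (\<iota>B x, \<iota>B y) \<in> edges C"
  unfolding edges_C by blast

lemma edges_C_cases:
  assumes "(n, m) \<in> edges C"
  obtains (A) x y where "(x, y) \<in> edges A" "n = \<iota>A x" "m = \<iota>A y"
    | (B) x y where "(x, y) \<in> edges B" "n = \<iota>B x" "m = \<iota>B y"
  using assms unfolding edges_C by auto

lemma graph_C: "is_graph C"
  unfolding is_graph_def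
proof (intro conjI allI impI ballI)
  show "finite (verts C)" unfolding verts_C using graph_A graph_B unfolding is_graph_def by auto
  show "edges C \<subseteq> verts C \<times> verts C"
    unfolding edges_C
    using \<iota>A_in_C \<iota>B_in_C is_graph_edge_in_verts[OF graph_A] is_graph_edge_in_verts[OF graph_B]
    by fastforce
next
  fix n assume "n \<in> verts C"
  then show "(n, n) \<in> edges C"
  proof (cases rule: verts_C_cases)
    case (A x)
    then have "\<iota>A x = n" unfolding glue_map_def by auto
    then show ?thesis using edge_\<iota>A is_graph_edge_refl[OF graph_A] A by force
  next
    case (B y)
    then have "\<iota>B y = n" unfolding glue_map_def by auto
    then show ?thesis using edge_\<iota>B is_graph_edge_refl[OF graph_B] B by force
  qed
next
  fix n m assume "(n, m) \<in> edges C"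
  then show "(m, n) \<in> edges C"
    by (cases rule: edges_C_cases)
      (auto intro: edge_\<iota>A edge_\<iota>B is_graph_edge_sym[OF graph_A] is_graph_edge_sym[OF graph_B])
qed

lemma edge_among_eA_a1: "x \<in> {eA, a1} \<Longrightarrow> y \<in> {eA, a1} \<Longrightarrow> (x, y) \<in> edges A"
  using pendant_edge_A is_graph_edge_refl[OF graph_A] is_graph_edge_sym[OF graph_A] by auto

lemma edge_\<pi>:
  assumes "(n, m) \<in> edges C" shows "(\<pi> n, \<pi> m) \<in> edges A"
  using assms
proof (cases rule: edges_C_cases)
  case (A x y)
  then show ?thesis using \<pi>_\<iota>A is_graph_edge_in_verts[OF graph_A] by simp
next
  case (B x y)
  then show ?thesis using \<pi>_\<iota>B is_graph_edge_in_verts[OF graph_B] edge_among_eA_a1 by simp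
qed

lemma edge_\<pi>_lift:
  assumes "(n, m) \<in> edges C" "\<pi> n \<noteq> \<pi> m"
  shows "n = \<iota>A (\<pi> n) \<and> m = \<iota>A (\<pi> m)"
  using assms(1)
proof (cases rule: edges_C_cases)
  case (A x y)
  then show ?thesis using \<pi>_\<iota>A is_graph_edge_in_verts[OF graph_A] by simp
next
  case (B x y)
  have \<iota>_eA: "\<iota>A eA = iB b1" and \<iota>_a1: "\<iota>A a1 = iA a1" using pendant_edge_A unfolding glue_map_def by auto
  have "x \<in> verts B" "y \<in> verts B" using B is_graph_edge_in_verts[OF graph_B] by auto
  with B assms(2) have "x = eB \<and> y \<noteq> eB \<or> x \<noteq> eB \<and> y = eB"
    using \<pi>_\<iota>B by (auto split: if_splits)
  then have "x = eB \<and> y = b1 \<or> x = b1 \<and> y = eB"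
    using pendant_B is_graph_edge_sym[OF graph_B] B(1) unfolding pendant_def by blast
  moreover have "\<pi> (iA a1) = a1" "\<pi> (iB b1) = eA" using \<pi>_iA \<pi>_iB pendant_edge_A pendant_edge_B by auto
  ultimately show ?thesis using B pendant_edge_B \<iota>_eA \<iota>_a1 unfolding glue_map_def by auto
qed

lemma fibre_\<pi>_off_leaf: "x \<in> verts A - {eA} \<Longrightarrow> fibre \<pi> C {x} = {iA x}"
proof -
  assume x: "x \<in> verts A - {eA}"
  have "n = iA x" if "n \<in> verts C" "\<pi> n = x" for n
    using that(1) by (cases rule: verts_C_cases) (use that(2) x \<pi>_iA \<pi>_iB in auto)
  moreover have "iA x \<in> verts C" unfolding verts_C using x by blast
  ultimately show ?thesis using \<pi>_iA[OF x] unfolding fibre_def by blast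
qed

lemma fibre_\<pi>_leaf: "fibre \<pi> C {eA} = iB ` (verts B - {eB})"
proof -
  have "n \<in> iB ` (verts B - {eB})" if "n \<in> verts C" "\<pi> n = eA" for n
    using that(1) by (cases rule: verts_C_cases) (use that(2) \<pi>_iA in auto)
  moreover have "iB ` (verts B - {eB}) \<subseteq> verts C" unfolding verts_C by blast
  ultimately show ?thesis using \<pi>_iB unfolding fibre_def by auto
qed

lemma connected_B_part: "connected_in C (iB ` (verts B - {eB}))"
  unfolding connected_in_def
proof (intro conjI ballI)
  show "iB ` (verts B - {eB}) \<subseteq> verts C" unfolding verts_C by blast
  have B_conn: "connected_in B (verts B - {eB})"
    using connected_remove_pendant[OF graph_B _ pendant_B] tree_B unfolding is_tree_def by blast
  have iB_step: "(iB y, iB y') \<in> induced_rel C (iB ` (verts B - {eB}))"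
    if "(y, y') \<in> induced_rel B (verts B - {eB})" for y y'
  proof -
    have "y \<in> verts B - {eB}" "y' \<in> verts B - {eB}" "(y, y') \<in> edges B"
      using that unfolding induced_rel_def by auto
    moreover from this have "(iB y, iB y') \<in> edges C"
      using edge_\<iota>B[of y y'] unfolding glue_map_def by simp
    ultimately show ?thesis unfolding induced_rel_def by blast
  qed
  show "(n, m) \<in> (induced_rel C (iB ` (verts B - {eB})))\<^sup>*"
    if n: "n \<in> iB ` (verts B - {eB})" and m: "m \<in> iB ` (verts B - {eB})" for n m
  proof -
    obtain y y' where "y \<in> verts B - {eB}" "y' \<in> verts B - {eB}" "n = iB y" "m = iB y'"
      using n m by blast
    with rtrancl_map[of "induced_rel B (verts B - {eB})" iB, OF iB_step connected_inD[OF B_conn]]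
    show ?thesis by simp
  qed
qed

lemma monotone_epi_\<pi>: "monotone_epi \<pi> C A"
  unfolding monotone_epi_def epimorphism_def
proof (intro conjI ballI)
  show "\<pi> ` verts C = verts A"
  proof (intro equalityI subsetI)
    fix x assume "x \<in> verts A"
    then show "x \<in> \<pi> ` verts C" using \<pi>_\<iota>A \<iota>A_in_C by (metis image_eqI)
  qed (use \<pi>_in_A in blast)
  fix x y assume x: "x \<in> verts A" and y: "y \<in> verts A"
  show "(x, y) \<in> edges A \<longleftrightarrow> (\<exists>n\<in>verts C. \<exists>m\<in>verts C. \<pi> n = x \<and> \<pi> m = y \<and> (n, m) \<in> edges C)"
  proof
    assume "(x, y) \<in> edges A"
    then show "\<exists>n\<in>verts C. \<exists>m\<in>verts C. \<pi> n = x \<and> \<pi> m = y \<and> (n, m) \<in> edges C"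
      using x y \<pi>_\<iota>A \<iota>A_in_C edge_\<iota>A by metis
  qed (use edge_\<pi> in blast)
next
  fix x assume x: "x \<in> verts A"
  show "connected_in C (fibre \<pi> C {x})"
  proof (cases "x = eA")
    case True
    then show ?thesis using fibre_\<pi>_leaf connected_B_part by simp
  next
    case False
    with x have "fibre \<pi> C {x} = {iA x}" "iA x \<in> verts C"
      using fibre_\<pi>_off_leaf unfolding verts_C by auto
    then show ?thesis unfolding connected_in_def by simp
  qed
qed

lemma unique_lift_epi_\<pi>: "unique_lift_epi \<pi> C A"
proof
  show "unique_edge_lifts \<pi> C"
    unfolding unique_edge_lifts_def using edge_\<pi>_lift by metis
qed (use graph_C graph_A monotone_epi_\<pi> in auto)

lemma connected_C: "connected_in C (verts C)"
proof -
  let ?R = "induced_rel C (verts C)"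
  have A_step: "(\<iota>A x, \<iota>A y) \<in> ?R" if "(x, y) \<in> induced_rel A (verts A)" for x y
    using that \<iota>A_in_C edge_\<iota>A unfolding induced_rel_def by simp
  have B_step: "(\<iota>B x, \<iota>B y) \<in> ?R" if "(x, y) \<in> induced_rel B (verts B)" for x y
    using that \<iota>B_in_C edge_\<iota>B unfolding induced_rel_def by simp
  have conn: "connected_in A (verts A)" "connected_in B (verts B)"
    using tree_A tree_B unfolding is_tree_def by simp_all
  have from_root: "(iA a1, n) \<in> ?R\<^sup>*" if "n \<in> verts C" for n
    using that
  proof (cases rule: verts_C_cases)
    case (A x)
    with rtrancl_map[of _ \<iota>A, OF A_step connected_inD[OF conn(1), of a1 x]] pendant_edge_A
    show ?thesis unfolding glue_map_def by simp
  next
    case (B y)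
    with rtrancl_map[of _ \<iota>B, OF B_step connected_inD[OF conn(2), of eB y]] pendant_edge_B
    show ?thesis unfolding glue_map_def by simp
  qed
  have "sym (?R\<^sup>*)" using sym_rtrancl induced_rel_sym[OF graph_C] by blast
  then show ?thesis
    unfolding connected_in_def using from_root by (meson order_refl rtrancl_trans symD)
qed

lemma \<pi>_collapse:
  assumes e: "(n, m) \<in> edges C" and "n \<noteq> m" "\<pi> n = \<pi> m"
  shows "glue_proj B eB iB n \<noteq> glue_proj B eB iB m"
proof -
  have nm: "n \<in> verts C" "m \<in> verts C" using is_graph_edge_in_verts[OF graph_C e] by auto
  have "\<pi> n = eA"
  proof (rule ccontr)
    assume "\<pi> n \<noteq> eA"
    then have "fibre \<pi> C {\<pi> n} = {iA (\<pi> n)}" using fibre_\<pi>_off_leaf \<pi>_in_A nm by simp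
    then have "n = iA (\<pi> n)" "m = iA (\<pi> n)" using nm assms(3) unfolding fibre_def by auto
    with assms(2) show False by simp
  qed
  then have "n \<in> fibre \<pi> C {eA}" "m \<in> fibre \<pi> C {eA}" using nm assms(3) unfolding fibre_def by auto
  then obtain y y' where "y \<in> verts B - {eB}" "y' \<in> verts B - {eB}" "n = iB y" "m = iB y'"
    unfolding fibre_\<pi>_leaf by blast
  then show ?thesis using glue_setup.\<pi>_iA[OF swap] assms(2) by auto
qed

lemma every_edge_bridge_C: "every_edge_bridge C"
  unfolding every_edge_bridge_def
proof (intro allI impI)
  fix n m assume e: "(n, m) \<in> edges C" and "n \<noteq> m"
  have bridges: "every_edge_bridge A" "every_edge_bridge B"
    using every_edge_bridge_if_acyclic tree_A tree_B unfolding is_tree_def by blast+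
  show "(m, n) \<notin> (edges_except C n m)\<^sup>*"
  proof (cases "\<pi> n = \<pi> m")
    case False
    then show ?thesis using unique_lift_epi.bridge_lift[OF unique_lift_epi_\<pi> bridges(1) e] by blast
  next
    case True
    have "unique_lift_epi (glue_proj B eB iB) C B"
      using glue_setup.unique_lift_epi_\<pi>[OF swap] by (simp only: glue_commute[of B eB b1 iB A eA a1 iA])
    from unique_lift_epi.bridge_lift[OF this bridges(2) e] \<pi>_collapse[OF e \<open>n \<noteq> m\<close> True]
    show ?thesis by blast
  qed
qed

lemma tree_C: "is_tree C"
proof -
  have "iA a1 \<in> verts C" unfolding verts_C using pendant_edge_A by blast
  then show ?thesis
    unfolding is_tree_def using graph_C connected_C every_edge_bridge_C not_every_edge_bridge_if_cycle
    by blast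
qed

lemma coherent_\<pi>: "coherent \<pi> C A"
  unfolding coherent_def point_of_coherence_def
proof (intro ballI impI)
  fix x assume x: "x \<in> verts A" and "3 \<le> ord A x"
  then have "x \<in> verts A - {eA}" using ord_pendant[OF graph_A pendant_A] by auto
  then have "coherence_witness \<pi> C A x (iA x)"
    using unique_lift_epi.coherence_witness_singleton_fibre[OF unique_lift_epi_\<pi> x fibre_\<pi>_off_leaf]
    by simp
  then show "\<exists>c. coherence_witness \<pi> C A x c" ..
qed

lemma ord_C_iA: "x \<in> verts A - {eA} \<Longrightarrow> ord C (iA x) = ord A x"
  using unique_lift_epi.ord_singleton_fibre[OF unique_lift_epi_\<pi> _ fibre_\<pi>_off_leaf] by simp

lemma vertex_orders_C: "ord C ` verts C \<subseteq> ord A ` verts A \<union> ord B ` verts B"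
proof
  fix k assume "k \<in> ord C ` verts C"
  then obtain n where n: "n \<in> verts C" "k = ord C n" by blast
  then show "k \<in> ord A ` verts A \<union> ord B ` verts B"
  proof (cases rule: verts_C_cases)
    case (A x)
    then show ?thesis using n ord_C_iA by auto
  next
    case (B y)
    then have "ord C n = ord B y"
      using glue_setup.ord_C_iA[OF swap] by (simp only: glue_commute[of B eB b1 iB A eA a1 iA])
    then show ?thesis using n B by auto
  qed
qed

end

definition coherent_common_cover :: "'c graph \<Rightarrow> 'a graph \<Rightarrow> 'b graph \<Rightarrow> bool" where
  "coherent_common_cover C A B \<longleftrightarrow> is_tree C \<and> ord C ` verts C \<subseteq> ord A ` verts A \<union> ord B ` verts B \<and>
     (\<exists>f. monotone_epi f C A \<and> coherent f C A) \<and> (\<exists>g. monotone_epi g C B \<and> coherent g C B)"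

lemma glue_common_cover:
  fixes A :: "'a graph" and B :: "'b graph"
  assumes A: "is_tree A" "pendant A eA a1" and B: "is_tree B" "pendant B eB b1"
  shows "\<exists>C :: nat graph. coherent_common_cover C A B"
proof -
  have "finite (verts A)" "finite (verts B)"
    using A B unfolding is_tree_def is_graph_def by auto
  then obtain hA :: "'a \<Rightarrow> nat" and hB :: "'b \<Rightarrow> nat"
    where hA: "inj_on hA (verts A)" and hB: "inj_on hB (verts B)"
    using finite_imp_inj_to_nat_seg by meson
  define iA where "iA x = 2 * hA x" for x
  define iB where "iB y = 2 * hB y + 1" for y
  have "inj_on iA (verts A)" "inj_on iB (verts B)"
    using hA hB unfolding iA_def iB_def inj_on_def by auto
  moreover have "iA ` verts A \<inter> iB ` verts B = {}"
    unfolding iA_def iB_def by auto presburger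
  ultimately interpret glue_setup A eA a1 iA B eB b1 iB
    using A B by unfold_locales
  have "monotone_epi (glue_proj B eB iB) C B" "coherent (glue_proj B eB iB) C B"
    using glue_setup.monotone_epi_\<pi>[OF swap] glue_setup.coherent_\<pi>[OF swap]
    by (simp_all only: glue_commute[of B eB b1 iB A eA a1 iA])
  with tree_C vertex_orders_C monotone_epi_\<pi> coherent_\<pi> show ?thesis
    unfolding coherent_common_cover_def by blast
qed

lemma ord_singleton: "verts G = {a} \<Longrightarrow> ord G a = 0"
  unfolding ord_def by auto

lemma constant_map_coherent:
  assumes C: "is_tree C" and A: "is_graph A" "verts A = {a}"
  shows "monotone_epi (\<lambda>_. a) C A \<and> coherent (\<lambda>_. a) C A"
proof
  have "is_graph C" "verts C \<noteq> {}" "connected_in C (verts C)" using C unfolding is_tree_def by auto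
  moreover have "(a, a) \<in> edges A" using is_graph_edge_refl[OF A(1)] A(2) by simp
  moreover obtain c where "c \<in> verts C" using \<open>verts C \<noteq> {}\<close> by blast
  moreover note is_graph_edge_refl[OF \<open>is_graph C\<close> this]
  moreover have "fibre (\<lambda>_. a) C {a} = verts C" unfolding fibre_def by simp
  ultimately show "monotone_epi (\<lambda>_. a) C A"
    unfolding monotone_epi_def epimorphism_def using A(2) by auto
  show "coherent (\<lambda>_. a) C A"
    unfolding coherent_def using A(2) ord_singleton[OF A(2)] by simp
qed

lemma is_tree_singleton: "is_tree ({x}, {(x, x)})"
  unfolding is_tree_def is_graph_def connected_in_def has_cycle_def verts_def edges_def
proof (intro conjI allI impI ballI notI; (elim exE conjE)?)
  fix vs assume "3 \<le> length vs" "distinct vs" "set vs \<subseteq> fst ({x}, {(x, x)})"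
  then show False using card_mono[of "{x}" "set vs"] distinct_card by fastforce
qed (auto simp: induced_rel_def edges_def)

lemma tree_singleton_or_pendant:
  assumes A: "is_tree A"
  obtains a where "verts A = {a}" | e w where "pendant A e w"
proof (cases "\<exists>a. verts A = {a}")
  case False
  obtain u where u: "u \<in> verts A" using A unfolding is_tree_def by blast
  obtain v where v: "v \<in> verts A" "u \<noteq> v"
  proof (rule ccontr)
    assume "\<not> thesis"
    with that u have "verts A = {u}" by auto
    with False show False by blast
  qed
  from tree_has_pendant[OF A u v] that show thesis by blast
qed blast

lemma self_common_cover:
  assumes A: "is_tree A"
  shows "\<exists>C :: nat graph. coherent_common_cover C A A"
  using A
proof (cases rule: tree_singleton_or_pendant)
  case (1 a)
  let ?C = "({0::nat}, {(0, 0)})"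
  have "is_graph A" using A unfolding is_tree_def by simp
  then have cover: "monotone_epi (\<lambda>_. a) ?C A \<and> coherent (\<lambda>_. a) ?C A"
    using constant_map_coherent[OF is_tree_singleton _ 1] by simp
  have "verts ?C = {0}" by (simp add: verts_def)
  then have "ord ?C ` verts ?C = ord A ` verts A" using 1 ord_singleton[OF 1] ord_singleton by simp
  with cover is_tree_singleton[of 0] have "coherent_common_cover ?C A A"
    unfolding coherent_common_cover_def by auto
  then show ?thesis ..
next
  case (2 e w)
  from glue_common_cover[OF A this A this] show ?thesis .
qed

lemma coherent_common_cover_sym: "coherent_common_cover C A B \<Longrightarrow> coherent_common_cover C B A"
  unfolding coherent_common_cover_def by blast

lemma coherent_common_cover_singleton:
  assumes A: "is_graph A" "verts A = {a}" and C: "coherent_common_cover C B B"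
  shows "coherent_common_cover C A B"
proof -
  have "is_tree C" using C unfolding coherent_common_cover_def by simp
  from constant_map_coherent[OF this A] C show ?thesis
    unfolding coherent_common_cover_def by blast
qed

lemma coherent_common_cover_exists:
  assumes A: "is_tree A" and B: "is_tree B"
  shows "\<exists>C :: nat graph. coherent_common_cover C A B"
  using A
proof (cases rule: tree_singleton_or_pendant)
  case (1 a)
  obtain C :: "nat graph" where C: "coherent_common_cover C B B" using self_common_cover[OF B] ..
  have "is_graph A" using A unfolding is_tree_def by simp
  from coherent_common_cover_singleton[OF this 1 C] show ?thesis ..
next
  case A_pendant: (2 eA a1)
  from B show ?thesis
  proof (cases rule: tree_singleton_or_pendant)
    case (1 b)
    obtain C :: "nat graph" where C: "coherent_common_cover C A A" using self_common_cover[OF A] ..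
    have "is_graph B" using B unfolding is_tree_def by simp
    from coherent_common_cover_sym[OF coherent_common_cover_singleton[OF this 1 C]] show ?thesis ..
  next
    case (2 eB b1)
    from glue_common_cover[OF A A_pendant B this] show ?thesis .
  qed
qed

lemma weak_coherence_witness_if_coherence_witness:
  "coherence_witness f C A a c \<Longrightarrow> weak_coherence_witness f C A a c"
  unfolding coherence_witness_def weak_coherence_witness_def
  by (metis bij_betw_imp_inj_on bij_betw_imp_surj_on order_refl)

lemma F_mor_if_coherent:
  assumes "monotone_epi f C A" "coherent f C A"
  shows "F_mor P f C A"
  unfolding F_mor_def
proof (intro conjI ballI impI)
  fix a assume "a \<in> verts A" "3 \<le> ord A a"
  then obtain c where c: "coherence_witness f C A a c"
    using assms(2) unfolding coherent_def point_of_coherence_def by blast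
  then show "point_of_coherence f C A a" unfolding point_of_coherence_def by blast
  assume "enat (ord A a) \<notin> P"
  moreover have "ord C c = ord A a" using c unfolding coherence_witness_def by simp
  ultimately show "\<exists>b. weak_coherence_witness f C A a b \<and> enat (ord C b) \<notin> P"
    using weak_coherence_witness_if_coherence_witness[OF c] by auto
qed (rule assms(1))

lemma coherent_common_cover_ord:
  assumes C: "coherent_common_cover C A B" and n: "n \<in> verts C"
    and "\<forall>a\<in>verts A. Q (ord A a)" "\<forall>b\<in>verts B. Q (ord B b)"
  shows "Q (ord C n)"
proof -
  have "ord C n \<in> ord A ` verts A \<union> ord B ` verts B"
    using C n unfolding coherent_common_cover_def by blast
  with assms(3,4) show ?thesis by auto
qed

lemma F_obj_cover:
  assumes C: "coherent_common_cover C A B" and "F_obj P A" "F_obj P B"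
  shows "F_obj P C"
  unfolding F_obj_def
proof (intro conjI ballI)
  show "is_tree C" using C unfolding coherent_common_cover_def by simp
  fix n assume "n \<in> verts C"
  from coherent_common_cover_ord[OF C this, of "\<lambda>k. k \<noteq> 2"] assms(2,3)
  show "ord C n \<noteq> 2" unfolding F_obj_def by simp
qed

lemma G_obj_cover:
  assumes C: "coherent_common_cover C A B" and "G_obj P A" "G_obj P B"
  shows "G_obj P C"
  unfolding G_obj_def
proof (intro conjI ballI)
  show "is_tree C" using C unfolding coherent_common_cover_def by simp
  fix n assume "n \<in> verts C"
  from coherent_common_cover_ord[OF C this, of "\<lambda>k. k \<le> 1 \<or> enat k \<in> P"] assms(2,3)
  show "ord C n \<le> 1 \<or> enat (ord C n) \<in> P" unfolding G_obj_def by simp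
qed

lemma F_joint_projection:
  assumes A: "F_obj P A" and B: "F_obj P B"
  shows "\<exists>(C :: nat graph) f g. F_obj P C \<and> F_mor P f C A \<and> F_mor P g C B"
proof -
  obtain C :: "nat graph" where C: "coherent_common_cover C A B"
    using coherent_common_cover_exists A B unfolding F_obj_def by blast
  then obtain f g where "monotone_epi f C A" "coherent f C A" "monotone_epi g C B" "coherent g C B"
    unfolding coherent_common_cover_def by blast
  then have "F_mor P f C A" "F_mor P g C B" by (simp_all add: F_mor_if_coherent)
  with F_obj_cover[OF C A B] show ?thesis by blast
qed

lemma G_joint_projection:
  assumes A: "G_obj P A" and B: "G_obj P B"
  shows "\<exists>(C :: nat graph) f g. G_obj P C \<and> G_mor P f C A \<and> G_mor P g C B"
proof -
  obtain C :: "nat graph" where C: "coherent_common_cover C A B"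
    using coherent_common_cover_exists A B unfolding G_obj_def by blast
  then obtain f g where "monotone_epi f C A" "coherent f C A" "monotone_epi g C B" "coherent g C B"
    unfolding coherent_common_cover_def by blast
  with G_obj_cover[OF C A B] show ?thesis unfolding G_mor_def by blast
qed

theorem mainTheorem4:
  fixes P :: "enat set"
  assumes "\<forall>x\<in>P. x \<ge> 3"
  shows "(\<infinity> \<in> P \<longrightarrow>
           (\<forall>(A :: 'a graph) (B :: 'b graph). F_obj P A \<and> F_obj P B \<longrightarrow>
              (\<exists>(C :: nat graph) f1 f2. F_obj P C \<and> F_mor P f1 C A \<and> F_mor P f2 C B)))
       \<and> (\<infinity> \<notin> P \<longrightarrow>
           (\<forall>(A :: 'a graph) (B :: 'b graph). G_obj P A \<and> G_obj P B \<longrightarrow>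
              (\<exists>(C :: nat graph) f1 f2. G_obj P C \<and> G_mor P f1 C A \<and> G_mor P f2 C B)))"
  using F_joint_projection[of P] G_joint_projection[of P] by blast

end
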